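(* Let $n \ge k \ge 1$ and let $n_1 \le n_2 \le \cdots \le n_k$ be positive integers summing to $n$. Let $G = G(n_1,\ldots,n_k)$ and, for each $i$, let $P_i$ be the directed path $v_{i,1} \to v_{i,2} \to \cdots \to v_{i,n_i}$. Then the digraph $D(G,P_1,\ldots,P_k)$ is acyclic.
   Context: The graph $G(n_1,\ldots,n_k)$: for each $1 \le i \le k$ it contains a path on vertices $v_{i,1},\ldots,v_{i,n_i}$ (edges $v_{i,a}v_{i,a+1}$ for $1 \le a < n_i$), all vertices distinct, and additionally, for each $1 \le i < j \le k$: (i) if $n_i > 1$, the edge $v_{i,a}v_{j,a}$ for each $1 \le a < n_i$; (ii) if $n_j > 1$, the edge $v_{i,a+1}v_{j,a}$ for each $1 \le a < n_i$; (iii) the edge $v_{i,n_i}v_{j,a}$ for each $n_i \le a \le n_j$. For a graph $G$ with vertex-disjoint directed paths $P_1,\ldots,P_k$ covering $V(G)$, the digraph $D(G,P_1,\ldots,P_k)$ has vertex set $V(G)$, and for distinct $x,y$ there is an arc $x \to y$ iff either some $P_j$ contains the arc $x \to y$, or there is a vertex $z$ and a path $P_j$ with $x \to z$ an arc of $P_j$ and $y$ adjacent to $z$ in $G$. Acyclic means no directed cycle. *)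

theory Defs
  imports Main
begin

text \<open>Vertex v_{i,a} is represented by the pair (i,a), with 1 <= i <= k and
 1 <= a <= ns i. The sizes n_1..n_k are given by a function ns :: nat => nat.\<close>

definition Gverts :: "nat \<Rightarrow> (nat \<Rightarrow> nat) \<Rightarrow> (nat \<times> nat) set" where
  "Gverts k ns = {(i, a). 1 \<le> i \<and> i \<le> k \<and> 1 \<le> a \<and> a \<le> ns i}"

definition Gedge :: "nat \<Rightarrow> (nat \<Rightarrow> nat) \<Rightarrow> nat \<times> nat \<Rightarrow> nat \<times> nat \<Rightarrow> bool" where
  "Gedge k ns x y \<longleftrightarrow>
     (\<exists>i a. 1 \<le> i \<and> i \<le> k \<and> 1 \<le> a \<and> a < ns i \<and> x = (i, a) \<and> y = (i, a + 1))
   \<or> (\<exists>i j. 1 \<le> i \<and> i < j \<and> j \<le> k \<and>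
        ((ns i > 1 \<and> (\<exists>a. 1 \<le> a \<and> a < ns i \<and> x = (i, a) \<and> y = (j, a)))
       \<or> (ns j > 1 \<and> (\<exists>a. 1 \<le> a \<and> a < ns i \<and> x = (i, a + 1) \<and> y = (j, a)))
       \<or> (\<exists>a. ns i \<le> a \<and> a \<le> ns j \<and> x = (i, ns i) \<and> y = (j, a))))"

definition Gadj :: "nat \<Rightarrow> (nat \<Rightarrow> nat) \<Rightarrow> nat \<times> nat \<Rightarrow> nat \<times> nat \<Rightarrow> bool" where
  "Gadj k ns x y \<longleftrightarrow> x \<in> Gverts k ns \<and> y \<in> Gverts k ns \<and> (Gedge k ns x y \<or> Gedge k ns y x)"

definition Parc :: "nat \<Rightarrow> (nat \<Rightarrow> nat) \<Rightarrow> nat \<times> nat \<Rightarrow> nat \<times> nat \<Rightarrow> bool" where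
  "Parc k ns x y \<longleftrightarrow>
     (\<exists>i a. 1 \<le> i \<and> i \<le> k \<and> 1 \<le> a \<and> a < ns i \<and> x = (i, a) \<and> y = (i, a + 1))"

text \<open>The digraph D(G, P_1,...,P_k) for a graph with vertex set V, adjacency adj,
 and path-arc relation parc (union of the arcs of all paths), as a set of arcs.\<close>
definition Ddigraph :: "'v set \<Rightarrow> ('v \<Rightarrow> 'v \<Rightarrow> bool) \<Rightarrow> ('v \<Rightarrow> 'v \<Rightarrow> bool) \<Rightarrow> ('v \<times> 'v) set" where
  "Ddigraph V adj parc = {(x, y). x \<in> V \<and> y \<in> V \<and> x \<noteq> y \<and>
       (parc x y \<or> (\<exists>z. parc x z \<and> adj y z))}"

end

theory Submission
  imports Defs "HOL-Library.Product_Lexorder"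
begin

text \<open>Order the vertices of D by the lexicographic key (position on its path, index of the
  path), except that the last vertex of every path gets the key (n_k, 0), above every
  non-final vertex since n_k is the largest path length. Every arc
  x \<rightarrow> y of D starts at a non-final vertex v_{i,a} and ends at a final vertex or at a
  neighbour (or the successor) of v_{i,a+1}; inspecting the edges of G shows that such a
  vertex v_{j,c} is final or satisfies (a, i) < (c, j). So the key strictly increases along
  arcs, and D is acyclic.\<close>

lemma acyclic_if_potential_increasing:
  fixes f :: "'a \<Rightarrow> 'b::linorder"
  assumes "\<And>x y. (x, y) \<in> r \<Longrightarrow> f x < f y"
  shows "acyclic r"
proof -
  have "f x < f y" if "(x, y) \<in> r\<^sup>+" for x y
    using that by (induction rule: trancl_induct) (auto dest: assms)
  then show ?thesis
    unfolding acyclic_def by fastforce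
qed

lemma Gadj_succ_cases:
  assumes "Gadj k ns (j, c) (i, a + 1)" and "(j, c) \<noteq> (i, a)"
  shows "c = ns j \<or> (a, i) < (c, j)"
  using assms unfolding Gadj_def Gedge_def less_prod_def by auto

lemma Ddigraph_arc_cases:
  assumes "((i, a), (j, c)) \<in> Ddigraph (Gverts k ns) (Gadj k ns) (Parc k ns)"
  shows "1 \<le> i \<and> i \<le> k \<and> a < ns i"
    and "c = ns j \<or> (a, i) < (c, j)"
proof -
  obtain z where arc: "Parc k ns (i, a) z" and near: "(j, c) = z \<or> Gadj k ns (j, c) z"
    and ne: "(j, c) \<noteq> (i, a)"
    using assms unfolding Ddigraph_def by blast
  from arc have z: "z = (i, a + 1)" and "1 \<le> i \<and> i \<le> k \<and> a < ns i"
    unfolding Parc_def by auto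
  then show "1 \<le> i \<and> i \<le> k \<and> a < ns i" by simp
  from near ne show "c = ns j \<or> (a, i) < (c, j)"
    unfolding z using Gadj_succ_cases[of k ns j c i a] by (auto simp: less_prod_def)
qed

theorem lemma3:
  fixes k n :: nat and ns :: "nat \<Rightarrow> nat"
  assumes "1 \<le> k" and "k \<le> n"
    and "\<And>i. 1 \<le> i \<Longrightarrow> i \<le> k \<Longrightarrow> ns i \<ge> 1"
    and "\<And>i j. 1 \<le> i \<Longrightarrow> i \<le> j \<Longrightarrow> j \<le> k \<Longrightarrow> ns i \<le> ns j"
    and "(\<Sum>i = 1..k. ns i) = n"
  shows "acyclic (Ddigraph (Gverts k ns) (Gadj k ns) (Parc k ns))"
proof (rule acyclic_if_potential_increasing)
  let ?key = "\<lambda>(j, c). if c = ns j then (ns k, 0) else (c, j)"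
  fix x y
  assume xy: "(x, y) \<in> Ddigraph (Gverts k ns) (Gadj k ns) (Parc k ns)"
  obtain i a j c where x: "x = (i, a)" and y: "y = (j, c)" by fastforce
  note arc = Ddigraph_arc_cases[OF xy[unfolded x y]]
  have "a < ns k"
    using arc(1) assms(4)[of i k] by simp
  then show "?key x < ?key y"
    using arc unfolding x y by (auto simp: less_prod_def)
qed

end
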